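(* Let $F:\mathcal{P}(V,A)\to S_2(A)$ be a consular election rule satisfying SPP and SPO. Let $P$ be a profile with $F(P)=\{a,b\}$, let $i$ be a voter, $s\in A$, and let $P_i'$ be the linear order obtained from $P_i$ by moving $s$ up some number of positions (the relative order of the other alternatives unchanged). If $s\in\{a,b\}$, then $F(P_i'P_{-i})=F(P)$. If $s\notin\{a,b\}$, then either $F(P_i'P_{-i})=F(P)$, or $F(P_i'P_{-i})=(\{a,b\}\setminus\{x\})\cup\{s\}$ for some $x\in\{a,b\}$; and the latter happens only if $s$ overtakes $x$, i.e. $x\succ_i s$ in $P_i$ and $s\succ_i' x$ in $P_i'$.
   Context: $V$ is a finite nonempty set of voters, $A$ a finite set of alternatives; a profile $P$ assigns to each voter $i$ a linear order $P_i$ on $A$; $P_i'P_{-i}$ replaces voter $i$'s order by $P_i'$. $S_2(A)$ is the set of 2-element subsets of $A$; a consular election rule is a map $F:\mathcal{P}(V,A)\to S_2(A)$. SPO: for all $P$, $i$, $P_i'$, $\mathrm{best}(P_i,F(P))\succeq_i\mathrm{best}(P_i,F(P_i'P_{-i}))$; SPP: same with $\mathrm{worst}$, where $\mathrm{best}(P_i,W)$, $\mathrm{worst}(P_i,W)$ are the $P_i$-best and $P_i$-worst elements of $W$. *)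

theory Defs
  imports Main
begin

text \<open>A preference is a relation R on A; (x,y) \<in> R means x is weakly preferred to y
  (i.e. x = y or x is ranked above y). A linear order is Order_Relation.linear_order_on A R.\<close>

definition profile :: "'v set \<Rightarrow> 'a set \<Rightarrow> ('v \<Rightarrow> 'a rel) \<Rightarrow> bool" where
  "profile V A P \<longleftrightarrow> (\<forall>i\<in>V. linear_order_on A (P i)) \<and> (\<forall>i. i \<notin> V \<longrightarrow> P i = {})"

definition consular_rule :: "'v set \<Rightarrow> 'a set \<Rightarrow> (('v \<Rightarrow> 'a rel) \<Rightarrow> 'a set) \<Rightarrow> bool" where
  "consular_rule V A F \<longleftrightarrow> (\<forall>P. profile V A P \<longrightarrow> F P \<subseteq> A \<and> card (F P) = 2)"

definition best :: "'a rel \<Rightarrow> 'a set \<Rightarrow> 'a" where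
  "best R W = (THE x. x \<in> W \<and> (\<forall>y\<in>W. (x, y) \<in> R))"

definition worst :: "'a rel \<Rightarrow> 'a set \<Rightarrow> 'a" where
  "worst R W = (THE x. x \<in> W \<and> (\<forall>y\<in>W. (y, x) \<in> R))"

definition SPO :: "'v set \<Rightarrow> 'a set \<Rightarrow> (('v \<Rightarrow> 'a rel) \<Rightarrow> 'a set) \<Rightarrow> bool" where
  "SPO V A F \<longleftrightarrow> (\<forall>P i R'. profile V A P \<longrightarrow> i \<in> V \<longrightarrow> linear_order_on A R' \<longrightarrow>
      (best (P i) (F P), best (P i) (F (P(i := R')))) \<in> P i)"

definition SPP :: "'v set \<Rightarrow> 'a set \<Rightarrow> (('v \<Rightarrow> 'a rel) \<Rightarrow> 'a set) \<Rightarrow> bool" where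
  "SPP V A F \<longleftrightarrow> (\<forall>P i R'. profile V A P \<longrightarrow> i \<in> V \<longrightarrow> linear_order_on A R' \<longrightarrow>
      (worst (P i) (F P), worst (P i) (F (P(i := R')))) \<in> P i)"

definition moves_up :: "'a set \<Rightarrow> 'a \<Rightarrow> 'a rel \<Rightarrow> 'a rel \<Rightarrow> bool" where
  "moves_up A s R R' \<longleftrightarrow> linear_order_on A R' \<and>
     (\<forall>x\<in>A. \<forall>y\<in>A. x \<noteq> s \<longrightarrow> y \<noteq> s \<longrightarrow> ((x, y) \<in> R' \<longleftrightarrow> (x, y) \<in> R)) \<and>
     (\<forall>x\<in>A. (s, x) \<in> R \<longrightarrow> (s, x) \<in> R')"

end

theory Submission
  imports Defs
begin

text \<open>
  By SPO and SPP, under voter \<open>i\<close>'s old order the old committee is at least as good as the new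
  one both in its better and in its worse member; under the new order the new committee dominates
  the old one in the same sense. Raising \<open>s\<close> only
  strengthens comparisons in favour of \<open>s\<close>, so unless \<open>s\<close> newly enters the committee the two
  dominations hold under one order and the committee cannot change. If \<open>s\<close> is swapped with the
  alternative \<open>y\<close> directly above it, every other alternative compares with \<open>s\<close> as with \<open>y\<close>,
  and the two dominations force \<open>s\<close> to enter exactly in place of \<open>y\<close>. A general move of \<open>s\<close>
  is a sequence of such swaps, and once \<open>s\<close> is in the committee it stays there.
\<close>

lemma
  assumes "linear_order_on A R"
  shows linear_order_on_field: "R \<subseteq> A \<times> A"
    and linear_order_on_refl: "x \<in> A \<Longrightarrow> (x, x) \<in> R"
    and linear_order_on_trans: "(x, y) \<in> R \<Longrightarrow> (y, z) \<in> R \<Longrightarrow> (x, z) \<in> R"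
    and linear_order_on_antisym: "(x, y) \<in> R \<Longrightarrow> (y, x) \<in> R \<Longrightarrow> x = y"
    and linear_order_on_total: "x \<in> A \<Longrightarrow> y \<in> A \<Longrightarrow> (x, y) \<in> R \<or> (y, x) \<in> R"
proof -
  have po: "partial_order_on A R" and tot: "total_on A R"
    using assms unfolding linear_order_on_def by auto
  show "R \<subseteq> A \<times> A" using partial_order_onD(4)[OF po] .
  show "x \<in> A \<Longrightarrow> (x, x) \<in> R" using partial_order_onD(1)[OF po] by (rule refl_onD)
  show "(x, y) \<in> R \<Longrightarrow> (y, z) \<in> R \<Longrightarrow> (x, z) \<in> R" using partial_order_onD(2)[OF po] by (rule transD)
  show "(x, y) \<in> R \<Longrightarrow> (y, x) \<in> R \<Longrightarrow> x = y" using partial_order_onD(3)[OF po] by (rule antisymD)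
  show "x \<in> A \<Longrightarrow> y \<in> A \<Longrightarrow> (x, y) \<in> R \<or> (y, x) \<in> R"
    using tot refl_onD[OF partial_order_onD(1)[OF po]] unfolding total_on_def by metis
qed

lemma linear_order_on_finite_has_greatest:
  assumes lin: "linear_order_on A R" and "finite A" "X \<subseteq> A" "X \<noteq> {}"
  shows "\<exists>z\<in>X. \<forall>x\<in>X. (z, x) \<in> R"
proof -
  have "finite R"
    using linear_order_on_field[OF lin] \<open>finite A\<close> by (simp add: finite_subset)
  then have "wf (R - Id)"
    using lin linear_order_on_well_order_on unfolding well_order_on_def by blast
  then obtain z where "z \<in> X" "\<And>x. (x, z) \<in> R - Id \<Longrightarrow> x \<notin> X"
    using \<open>X \<noteq> {}\<close> by (metis ex_in_conv wfE_min)
  then show ?thesis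
    using linear_order_on_total[OF lin] \<open>X \<subseteq> A\<close> by blast
qed

lemma best_doubleton:
  assumes "linear_order_on A R" "x \<in> A" "y \<in> A"
  shows "best R {x, y} = (if (x, y) \<in> R then x else y)"
  unfolding best_def
  by (rule the_equality)
    (use assms linear_order_on_refl[OF assms(1)] linear_order_on_total[OF assms(1)]
         linear_order_on_antisym[OF assms(1)] in auto)

lemma worst_doubleton:
  assumes "linear_order_on A R" "x \<in> A" "y \<in> A"
  shows "worst R {x, y} = (if (x, y) \<in> R then y else x)"
  unfolding worst_def
  by (rule the_equality)
    (use assms linear_order_on_refl[OF assms(1)] linear_order_on_total[OF assms(1)]
         linear_order_on_antisym[OF assms(1)] in auto)

lemma best_doubleton_above:
  assumes lin: "linear_order_on A R" and "a \<in> A" "b \<in> A"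
  shows "(best R {a, b}, w) \<in> R \<longleftrightarrow> (a, w) \<in> R \<or> (b, w) \<in> R"
  using linear_order_on_trans[OF lin] linear_order_on_total[OF lin assms(2,3)]
  by (auto simp: best_doubleton[OF lin assms(2,3)])

lemma best_doubleton_below:
  assumes lin: "linear_order_on A R" and "a \<in> A" "b \<in> A"
  shows "(w, best R {a, b}) \<in> R \<longleftrightarrow> (w, a) \<in> R \<and> (w, b) \<in> R"
  using linear_order_on_trans[OF lin] linear_order_on_total[OF lin assms(2,3)]
  by (auto simp: best_doubleton[OF lin assms(2,3)])

lemma worst_doubleton_above:
  assumes lin: "linear_order_on A R" and "a \<in> A" "b \<in> A"
  shows "(worst R {a, b}, w) \<in> R \<longleftrightarrow> (a, w) \<in> R \<and> (b, w) \<in> R"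
  using linear_order_on_trans[OF lin] linear_order_on_total[OF lin assms(2,3)]
  by (auto simp: worst_doubleton[OF lin assms(2,3)])

lemma worst_doubleton_below:
  assumes lin: "linear_order_on A R" and "a \<in> A" "b \<in> A"
  shows "(w, worst R {a, b}) \<in> R \<longleftrightarrow> (w, a) \<in> R \<or> (w, b) \<in> R"
  using linear_order_on_trans[OF lin] linear_order_on_total[OF lin assms(2,3)]
  by (auto simp: worst_doubleton[OF lin assms(2,3)])

lemma doubleton_eq_best_worst:
  assumes "linear_order_on A R" "a \<in> A" "b \<in> A"
  shows "{best R {a, b}, worst R {a, b}} = {a, b}"
  by (auto simp: best_doubleton[OF assms] worst_doubleton[OF assms])

section \<open>Adjacent alternatives\<close>

definition covers :: "'a rel \<Rightarrow> 'a \<Rightarrow> 'a \<Rightarrow> bool" where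
  "covers R x y \<longleftrightarrow> (x, y) \<in> R \<and> x \<noteq> y \<and> (\<forall>z. (x, z) \<in> R \<longrightarrow> (z, y) \<in> R \<longrightarrow> z = x \<or> z = y)"

definition reverse_pair :: "'a \<Rightarrow> 'a \<Rightarrow> 'a rel \<Rightarrow> 'a rel" where
  "reverse_pair x y R = R - {(x, y)} \<union> {(y, x)}"

lemma covers_mem:
  assumes "linear_order_on A R" "covers R x y"
  shows "x \<in> A" "y \<in> A"
  using assms linear_order_on_field[OF assms(1)] unfolding covers_def by auto

lemma covers_above:
  assumes "linear_order_on A R" "covers R x y" "(z, y) \<in> R" "z \<noteq> y"
  shows "(z, x) \<in> R"
  using assms linear_order_on_total[OF assms(1)] linear_order_on_field[OF assms(1)]
  unfolding covers_def by blast

lemma covers_below: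
  assumes "linear_order_on A R" "covers R x y" "(x, z) \<in> R" "z \<noteq> x"
  shows "(y, z) \<in> R"
  using assms linear_order_on_total[OF assms(1)] linear_order_on_field[OF assms(1)]
  unfolding covers_def by blast

lemma linear_order_on_reverse_pair:
  assumes lin: "linear_order_on A R" and cov: "covers R x y"
  shows "linear_order_on A (reverse_pair x y R)"
proof -
  note field = linear_order_on_field[OF lin]
  have "x \<in> A" "y \<in> A" using covers_mem[OF lin cov] .
  show ?thesis
    unfolding linear_order_on_def partial_order_on_def preorder_on_def
  proof (intro conjI)
    show "refl_on A (reverse_pair x y R)" "reverse_pair x y R \<subseteq> A \<times> A"
      using linear_order_on_refl[OF lin] field \<open>x \<in> A\<close> \<open>y \<in> A\<close> cov
      unfolding reverse_pair_def refl_on_def covers_def by auto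
    show "antisym (reverse_pair x y R)"
      using linear_order_on_antisym[OF lin] unfolding reverse_pair_def antisym_def by blast
    show "total_on A (reverse_pair x y R)"
      using linear_order_on_total[OF lin] unfolding reverse_pair_def total_on_def by blast
    show "trans (reverse_pair x y R)"
    proof (rule transI)
      fix u v w assume uv: "(u, v) \<in> reverse_pair x y R" and vw: "(v, w) \<in> reverse_pair x y R"
      have "(u, w) \<in> R" if "(u, v) \<in> R" "(v, w) \<in> R"
        using linear_order_on_trans[OF lin] that .
      moreover have "(u, w) \<noteq> (x, y)"
        if "(u, v) \<in> R" "(v, w) \<in> R" "(u, v) \<noteq> (x, y)" "(v, w) \<noteq> (x, y)"
        using cov that unfolding covers_def by blast
      ultimately show "(u, w) \<in> reverse_pair x y R"
        using uv vw covers_above[OF lin cov] covers_below[OF lin cov] cov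
        unfolding reverse_pair_def covers_def by auto
    qed
  qed
qed

lemma covers_reverse_pair:
  assumes "linear_order_on A R" "covers R x y"
  shows "covers (reverse_pair x y R) y x"
  using assms linear_order_on_antisym[OF assms(1)] linear_order_on_trans[OF assms(1)]
  unfolding covers_def reverse_pair_def by blast

lemma reverse_pair_reverse_pair:
  assumes "linear_order_on A R" "covers R x y"
  shows "reverse_pair y x (reverse_pair x y R) = R"
  using assms linear_order_on_antisym[OF assms(1)] unfolding covers_def reverse_pair_def by blast

section \<open>Domination between committees\<close>

definition dominates :: "'a rel \<Rightarrow> 'a set \<Rightarrow> 'a set \<Rightarrow> bool" where
  "dominates R X Y \<longleftrightarrow> (best R X, best R Y) \<in> R \<and> (worst R X, worst R Y) \<in> R"

lemma dominates_doubleton_iff: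
  assumes "linear_order_on A R" "a \<in> A" "b \<in> A" "c \<in> A" "d \<in> A"
  shows "dominates R {a, b} {c, d} \<longleftrightarrow>
    (\<exists>x\<in>{a, b}. \<forall>y\<in>{c, d}. (x, y) \<in> R) \<and> (\<forall>x\<in>{a, b}. \<exists>y\<in>{c, d}. (x, y) \<in> R)"
  using assms
  by (simp add: dominates_def best_doubleton_above best_doubleton_below
      worst_doubleton_above worst_doubleton_below) blast

lemma dominates_antisym:
  assumes lin: "linear_order_on A R" and A: "a \<in> A" "b \<in> A" "c \<in> A" "d \<in> A"
    and "dominates R {a, b} {c, d}" "dominates R {c, d} {a, b}"
  shows "{a, b} = {c, d}"
proof -
  have "best R {a, b} = best R {c, d}" "worst R {a, b} = worst R {c, d}"
    using assms(6,7) unfolding dominates_def by (auto intro: linear_order_on_antisym[OF lin])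
  then have "{best R {a, b}, worst R {a, b}} = {best R {c, d}, worst R {c, d}}"
    by (rule arg_cong2)
  then show ?thesis
    unfolding doubleton_eq_best_worst[OF lin A(1,2)] doubleton_eq_best_worst[OF lin A(3,4)] .
qed

lemma dominates_shared_iff:
  assumes lin: "linear_order_on A R" and "s \<in> A" "u \<in> A" "v \<in> A"
  shows "dominates R {s, u} {s, v} \<longleftrightarrow> (u, v) \<in> R"
  using linear_order_on_refl[OF lin assms(2)] linear_order_on_total[OF lin assms(2,4)]
    linear_order_on_trans[OF lin, of u s v] linear_order_on_trans[OF lin, of u v s]
  by (auto simp: dominates_doubleton_iff[OF assms(1,2,3,2,4)])

lemma dominates_replace_covered:
  assumes lin: "linear_order_on A R" and cov: "covers R y s"
    and A: "a \<in> A" "b \<in> A" "v \<in> A" and "s \<notin> {a, b}"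
    and "dominates R {a, b} {s, v}"
  shows "dominates R {a, b} {y, v}"
proof -
  have "y \<in> A" "s \<in> A" using covers_mem[OF lin cov] .
  have "(x, y) \<in> R" if "(x, s) \<in> R" "x \<in> {a, b}" for x
    using covers_above[OF lin cov] that \<open>s \<notin> {a, b}\<close> by blast
  then show ?thesis
    using assms(7) A \<open>s \<in> A\<close> \<open>y \<in> A\<close>
    unfolding dominates_doubleton_iff[OF lin A(1,2) \<open>s \<in> A\<close> A(3)]
      dominates_doubleton_iff[OF lin A(1,2) \<open>y \<in> A\<close> A(3)]
    by blast
qed

section \<open>Moving an alternative up\<close>

lemma moves_up_linear_order_on:
  assumes "moves_up A s R R'"
  shows "linear_order_on A R'"
  using assms unfolding moves_up_def by blast

lemma moves_up_mono:
  assumes "moves_up A s R R'" "linear_order_on A R" "(x, z) \<in> R" "z \<noteq> s"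
  shows "(x, z) \<in> R'"
proof -
  have "x \<in> A" "z \<in> A" using assms(2,3) linear_order_on_field by blast+
  then show ?thesis using assms unfolding moves_up_def by (cases "x = s") auto
qed

lemma moves_up_agree:
  assumes "moves_up A s R R'" "linear_order_on A R" "x \<noteq> s" "z \<noteq> s"
  shows "(x, z) \<in> R' \<longleftrightarrow> (x, z) \<in> R"
proof (cases "x \<in> A \<and> z \<in> A")
  case True
  then show ?thesis using assms unfolding moves_up_def by blast
next
  case False
  then show ?thesis
    using linear_order_on_field[OF assms(2)]
      linear_order_on_field[OF moves_up_linear_order_on[OF assms(1)]] by blast
qed

lemma dominates_moves_up:
  assumes "moves_up A s R R'" and lin: "linear_order_on A R"
    and A: "a \<in> A" "b \<in> A" "c \<in> A" "d \<in> A" and "s \<notin> {c, d}"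
    and "dominates R {a, b} {c, d}"
  shows "dominates R' {a, b} {c, d}"
proof -
  have lin': "linear_order_on A R'" using moves_up_linear_order_on[OF assms(1)] .
  have "(x, y) \<in> R'" if "(x, y) \<in> R" "y \<in> {c, d}" for x y
    using moves_up_mono[OF assms(1) lin] that \<open>s \<notin> {c, d}\<close> by blast
  then show ?thesis
    using assms(8) unfolding dominates_doubleton_iff[OF lin A] dominates_doubleton_iff[OF lin' A]
    by blast
qed

lemma moves_up_reverse_pair:
  assumes lin: "linear_order_on A R" and cov: "covers R y s"
  shows "moves_up A s R (reverse_pair y s R)"
  using linear_order_on_reverse_pair[OF lin cov] cov
  unfolding moves_up_def reverse_pair_def covers_def by auto

lemma reverse_covered_pair_dominates_eq:
  assumes lin: "linear_order_on A R" and cov: "covers R y s"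
    and A: "u \<in> A" "v \<in> A" and "u \<notin> {s, y}" "v \<notin> {s, y}"
    and "dominates R {y, u} {s, v}" and "dominates (reverse_pair y s R) {s, v} {y, u}"
  shows "u = v"
proof -
  define R' where "R' = reverse_pair y s R"
  have lin': "linear_order_on A R'"
    unfolding R'_def by (rule linear_order_on_reverse_pair[OF lin cov])
  have cov': "covers R' s y"
    unfolding R'_def by (rule covers_reverse_pair[OF lin cov])
  have "y \<in> A" "s \<in> A" using covers_mem[OF lin cov] .
  \<comment> \<open>\<open>u\<close> and \<open>v\<close> compare with \<open>s\<close> as with \<open>y\<close>, so \<open>s\<close> may be replaced by \<open>y\<close>
    (in \<open>R\<close>) and \<open>y\<close> by \<open>s\<close> (in \<open>R'\<close>).\<close>
  have "dominates R {y, u} {y, v}"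
    using dominates_replace_covered[OF lin cov \<open>y \<in> A\<close> A] assms(5,7) cov
    unfolding covers_def by auto
  then have "(u, v) \<in> R"
    using dominates_shared_iff[OF lin \<open>y \<in> A\<close> A] by blast
  have "dominates R' {s, v} {s, u}"
    using dominates_replace_covered[OF lin' cov' \<open>s \<in> A\<close> A(2,1)] assms(6,8) cov
    unfolding R'_def covers_def by auto
  then have "(v, u) \<in> R'"
    using dominates_shared_iff[OF lin' \<open>s \<in> A\<close> A(2,1)] by blast
  then have "(v, u) \<in> R"
    using moves_up_agree[OF moves_up_reverse_pair[OF lin cov] lin] assms(5,6)
    unfolding R'_def by blast
  then show ?thesis
    using \<open>(u, v) \<in> R\<close> linear_order_on_antisym[OF lin] by blast
qed

definition overtaken :: "'a set \<Rightarrow> 'a \<Rightarrow> 'a rel \<Rightarrow> 'a rel \<Rightarrow> 'a set" where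
  "overtaken A s R R' = {x \<in> A. x \<noteq> s \<and> (x, s) \<in> R \<and> (s, x) \<in> R'}"

lemma moves_up_nothing_overtaken:
  assumes "moves_up A s R R'" and lin: "linear_order_on A R" and "s \<in> A"
    and "overtaken A s R R' = {}"
  shows "R' = R"
proof -
  have lin': "linear_order_on A R'" using moves_up_linear_order_on[OF assms(1)] .
  have from_s: "(s, z) \<in> R' \<longleftrightarrow> (s, z) \<in> R" if "z \<in> A" for z
  proof
    assume "(s, z) \<in> R'"
    show "(s, z) \<in> R"
    proof (rule ccontr)
      assume "(s, z) \<notin> R"
      then have "z \<in> overtaken A s R R'"
        using \<open>(s, z) \<in> R'\<close> that linear_order_on_total[OF lin \<open>s \<in> A\<close> that]
          linear_order_on_refl[OF lin] unfolding overtaken_def by auto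
      then show False using assms(4) by blast
    qed
  qed (use assms(1) that in \<open>auto simp: moves_up_def\<close>)
  have flip: "(x, s) \<in> Q \<longleftrightarrow> (s, x) \<notin> Q"
    if "linear_order_on A Q" "x \<in> A" "x \<noteq> s" for Q x
    using that linear_order_on_total[OF that(1) \<open>x \<in> A\<close> \<open>s \<in> A\<close>]
      linear_order_on_antisym[OF that(1)] by blast
  have "(x, z) \<in> R' \<longleftrightarrow> (x, z) \<in> R" if "x \<in> A" "z \<in> A" for x z
  proof -
    consider "x = s" | "z = s" "x \<noteq> s" | "x \<noteq> s" "z \<noteq> s" by blast
    then show ?thesis
    proof cases
      case 1 then show ?thesis using from_s that by blast
    next
      case 2 then show ?thesis using from_s flip[OF lin] flip[OF lin'] that by blast
    next
      case 3 then show ?thesis using moves_up_agree[OF assms(1) lin] by blast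
    qed
  qed
  then show ?thesis
    using linear_order_on_field[OF lin] linear_order_on_field[OF lin'] by auto
qed

lemma overtaken_has_covered:
  assumes "moves_up A s R R'" and lin: "linear_order_on A R" and "finite A"
    and "overtaken A s R R' \<noteq> {}"
  shows "\<exists>y\<in>overtaken A s R R'. covers R' s y"
proof -
  have lin': "linear_order_on A R'" using moves_up_linear_order_on[OF assms(1)] .
  obtain y where y: "y \<in> overtaken A s R R'" and top: "\<forall>z\<in>overtaken A s R R'. (y, z) \<in> R'"
    using linear_order_on_finite_has_greatest[OF lin' \<open>finite A\<close> _ assms(4)]
    unfolding overtaken_def by blast
  have "z = s \<or> z = y" if "(s, z) \<in> R'" "(z, y) \<in> R'" for z
  proof (rule ccontr)
    assume "\<not> (z = s \<or> z = y)"
    moreover have "(z, y) \<in> R"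
      using moves_up_agree[OF assms(1) lin] that(2) calculation y unfolding overtaken_def by blast
    ultimately have "z \<in> overtaken A s R R'"
      using that(1) y linear_order_on_trans[OF lin] linear_order_on_field[OF lin']
      unfolding overtaken_def by blast
    then show False
      using top that(2) linear_order_on_antisym[OF lin'] \<open>\<not> (z = s \<or> z = y)\<close> by blast
  qed
  then have "covers R' s y"
    using y unfolding covers_def overtaken_def by blast
  then show ?thesis using y by blast
qed

lemma moves_up_reverse_overtaken:
  assumes "moves_up A s R R'" and lin: "linear_order_on A R"
    and y: "y \<in> overtaken A s R R'" and cov: "covers R' s y"
  shows "moves_up A s R (reverse_pair s y R')"
    and "overtaken A s R (reverse_pair s y R') = overtaken A s R R' - {y}"
proof -
  have lin': "linear_order_on A R'" using moves_up_linear_order_on[OF assms(1)] .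
  have "(s, y) \<notin> R"
    using y linear_order_on_antisym[OF lin] unfolding overtaken_def by blast
  then show "moves_up A s R (reverse_pair s y R')"
    using assms(1) linear_order_on_reverse_pair[OF lin' cov] cov
    unfolding moves_up_def reverse_pair_def covers_def by auto
  show "overtaken A s R (reverse_pair s y R') = overtaken A s R R' - {y}"
    unfolding overtaken_def reverse_pair_def by auto
qed

lemma profile_linear_order_on:
  assumes "profile V A P" "i \<in> V"
  shows "linear_order_on A (P i)"
  using assms unfolding profile_def by blast

lemma profile_update:
  assumes "profile V A P" "i \<in> V" "linear_order_on A R'"
  shows "profile V A (P(i := R'))"
  using assms unfolding profile_def by auto

lemma consular_rule_doubleton:
  assumes "consular_rule V A F" "profile V A P"
  obtains a b where "F P = {a, b}" "a \<noteq> b" "a \<in> A" "b \<in> A"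
proof -
  have "F P \<subseteq> A" "card (F P) = 2" using assms unfolding consular_rule_def by auto
  then show ?thesis using that by (auto simp: card_2_iff)
qed

lemma consular_rule_doubleton_member:
  assumes "consular_rule V A F" "profile V A P" "x \<in> F P"
  obtains u where "F P = {x, u}" "u \<in> A" "u \<noteq> x"
proof -
  obtain a b where "F P = {a, b}" "a \<noteq> b" "a \<in> A" "b \<in> A"
    using consular_rule_doubleton[OF assms(1,2)] .
  then show ?thesis using that assms(3) by (auto simp: insert_commute)
qed

lemma SPO_SPP_dominates:
  assumes "SPO V A F" "SPP V A F" "profile V A P" "i \<in> V" "linear_order_on A R'"
  shows "dominates (P i) (F P) (F (P(i := R')))"
proof -
  have "(best (P i) (F P), best (P i) (F (P(i := R')))) \<in> P i"
    using assms(1,3-5) unfolding SPO_def by blast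
  moreover have "(worst (P i) (F P), worst (P i) (F (P(i := R')))) \<in> P i"
    using assms(2-5) unfolding SPP_def by blast
  ultimately show ?thesis unfolding dominates_def ..
qed

lemma SPO_SPP_dominates_back:
  assumes "SPO V A F" "SPP V A F" "profile V A P" "i \<in> V" "linear_order_on A R'"
  shows "dominates R' (F (P(i := R'))) (F P)"
proof -
  have "dominates ((P(i := R')) i) (F (P(i := R'))) (F ((P(i := R'))(i := P i)))"
    using SPO_SPP_dominates[OF assms(1,2) profile_update[OF assms(3-5)] assms(4)]
      profile_linear_order_on[OF assms(3,4)] .
  then show ?thesis by simp
qed

lemma moves_up_outcome_unchanged:
  assumes CR: "consular_rule V A F" and SP: "SPO V A F" "SPP V A F"
    and P: "profile V A P" and i: "i \<in> V" and mv: "moves_up A s (P i) R'"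
    and "s \<in> F P \<or> s \<notin> F (P(i := R'))"
  shows "F (P(i := R')) = F P"
proof -
  have lin: "linear_order_on A (P i)" using profile_linear_order_on[OF P i] .
  have lin': "linear_order_on A R'" using moves_up_linear_order_on[OF mv] .
  obtain a b where ab: "F P = {a, b}" "a \<noteq> b" "a \<in> A" "b \<in> A"
    using consular_rule_doubleton[OF CR P] .
  obtain c d where cd: "F (P(i := R')) = {c, d}" "c \<noteq> d" "c \<in> A" "d \<in> A"
    using consular_rule_doubleton[OF CR profile_update[OF P i lin']] .
  have dom: "dominates (P i) {a, b} {c, d}"
    using SPO_SPP_dominates[OF SP P i lin'] unfolding ab cd .
  have dom': "dominates R' {c, d} {a, b}"
    using SPO_SPP_dominates_back[OF SP P i lin'] unfolding ab cd .
  consider "s \<notin> {c, d}" | "s \<in> {a, b}" "s \<in> {c, d}"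
    using assms(7) unfolding ab cd by blast
  then show ?thesis
  proof cases
    case 1
    then have "dominates R' {a, b} {c, d}"
      using dominates_moves_up[OF mv lin ab(3,4) cd(3,4) _ dom] by blast
    then show ?thesis
      using dominates_antisym[OF lin' cd(3,4) ab(3,4) dom'] unfolding ab cd by blast
  next
    case 2
    then have "s \<in> A" using ab by blast
    obtain u where u: "{a, b} = {s, u}" "u \<in> A" "u \<noteq> s"
      using 2 ab by (auto simp: insert_commute)
    obtain v where v: "{c, d} = {s, v}" "v \<in> A" "v \<noteq> s"
      using 2 cd by (auto simp: insert_commute)
    have "(u, v) \<in> P i"
      using dom unfolding u(1) v(1) dominates_shared_iff[OF lin \<open>s \<in> A\<close> u(2) v(2)] .
    moreover have "(v, u) \<in> R'"
      using dom' unfolding u(1) v(1) dominates_shared_iff[OF lin' \<open>s \<in> A\<close> v(2) u(2)] .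
    then have "(v, u) \<in> P i"
      using moves_up_agree[OF mv lin v(3) u(3)] by blast
    ultimately have "u = v"
      using linear_order_on_antisym[OF lin] by blast
    then show ?thesis unfolding ab(1) cd(1) u(1) v(1) by simp
  qed
qed

lemma reverse_covered_pair_outcome:
  assumes CR: "consular_rule V A F" and SP: "SPO V A F" "SPP V A F"
    and P: "profile V A P" and i: "i \<in> V" and cov: "covers (P i) y s"
  defines "Q \<equiv> P(i := reverse_pair y s (P i))"
  shows "F Q = F P \<or> (y \<in> F P \<and> s \<notin> F P \<and> F Q = F P - {y} \<union> {s})"
proof (cases "s \<in> F P \<or> s \<notin> F Q")
  case True
  then show ?thesis
    using moves_up_outcome_unchanged[OF CR SP P i moves_up_reverse_pair] cov
      profile_linear_order_on[OF P i] unfolding Q_def by blast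
next
  case False
  define R' where "R' = reverse_pair y s (P i)"
  have lin: "linear_order_on A (P i)" using profile_linear_order_on[OF P i] .
  have lin': "linear_order_on A R'"
    unfolding R'_def by (rule linear_order_on_reverse_pair[OF lin cov])
  have Q: "profile V A Q" unfolding Q_def R'_def[symmetric] by (rule profile_update[OF P i lin'])
  have moves_back: "moves_up A y (Q i) (P i)"
    using moves_up_reverse_pair[OF lin' covers_reverse_pair[OF lin cov, folded R'_def]]
      reverse_pair_reverse_pair[OF lin cov] unfolding Q_def R'_def by simp
  have "Q(i := P i) = P" unfolding Q_def by simp
  then have "y \<in> F P" "y \<notin> F Q"
    using moves_up_outcome_unchanged[OF CR SP Q i moves_back] False by (metis, metis)
  obtain u where u: "F P = {y, u}" "u \<in> A" "u \<noteq> y"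
    using consular_rule_doubleton_member[OF CR P \<open>y \<in> F P\<close>] .
  obtain v where v: "F Q = {s, v}" "v \<in> A" "v \<noteq> s"
    using consular_rule_doubleton_member[OF CR Q] False by blast
  have FQ: "F (P(i := R')) = {s, v}" using v(1) unfolding Q_def R'_def .
  have "u = v"
  proof (rule reverse_covered_pair_dominates_eq[OF lin cov u(2) v(2)])
    show "u \<notin> {s, y}" "v \<notin> {s, y}" using u v False \<open>y \<notin> F Q\<close> by auto
    show "dominates (P i) {y, u} {s, v}"
      using SPO_SPP_dominates[OF SP P i lin'] unfolding u(1) FQ .
    show "dominates (reverse_pair y s (P i)) {s, v} {y, u}"
      using SPO_SPP_dominates_back[OF SP P i lin'] unfolding u(1) FQ R'_def[symmetric] .
  qed
  then show ?thesis using u v False by auto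
qed

lemma moves_up_outcome:
  assumes CR: "consular_rule V A F" and SP: "SPO V A F" "SPP V A F"
    and P: "profile V A P" and i: "i \<in> V" and "s \<in> A" and "finite A"
    and "moves_up A s (P i) R'"
  shows "F (P(i := R')) = F P \<or>
    (\<exists>x\<in>F P. F (P(i := R')) = F P - {x} \<union> {s} \<and> (x, s) \<in> P i \<and> (s, x) \<in> R')"
  using assms(8)
proof (induction R' rule: measure_induct_rule[where f = "\<lambda>R'. card (overtaken A s (P i) R')"])
  case (less R')
  have lin: "linear_order_on A (P i)" using profile_linear_order_on[OF P i] .
  show ?case
  proof (cases "overtaken A s (P i) R' = {}")
    case True
    then show ?thesis
      using moves_up_nothing_overtaken[OF less.prems lin \<open>s \<in> A\<close>] by simp
  next
    case False
    then obtain y where y: "y \<in> overtaken A s (P i) R'" and cov: "covers R' s y"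
      using overtaken_has_covered[OF less.prems lin \<open>finite A\<close>] by blast
    \<comment> \<open>Undo the last overtaking: \<open>s\<close> drops back just below \<open>y\<close>; the rest is one
      adjacent swap, after which \<open>s\<close> can only have entered in place of \<open>y\<close>.\<close>
    define R1 where "R1 = reverse_pair s y R'"
    have lin': "linear_order_on A R'" using moves_up_linear_order_on[OF less.prems] .
    have mv1: "moves_up A s (P i) R1"
      unfolding R1_def by (rule moves_up_reverse_overtaken(1)[OF less.prems lin y cov])
    have "card (overtaken A s (P i) R1) < card (overtaken A s (P i) R')"
      unfolding R1_def moves_up_reverse_overtaken(2)[OF less.prems lin y cov]
      using \<open>finite A\<close> by (intro card_Diff1_less[OF _ y]) (simp add: overtaken_def)
    then have IH: "F (P(i := R1)) = F P \<or>
        (\<exists>x\<in>F P. F (P(i := R1)) = F P - {x} \<union> {s} \<and> (x, s) \<in> P i \<and> (s, x) \<in> R1)"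
      using less.IH mv1 by blast
    have lin1: "linear_order_on A R1"
      unfolding R1_def by (rule linear_order_on_reverse_pair[OF lin' cov])
    have P1: "profile V A (P(i := R1))" by (rule profile_update[OF P i lin1])
    have cov1: "covers ((P(i := R1)) i) y s"
      unfolding R1_def by (simp add: covers_reverse_pair[OF lin' cov])
    have R1_back: "reverse_pair y s ((P(i := R1)) i) = R'"
      unfolding R1_def by (simp add: reverse_pair_reverse_pair[OF lin' cov])
    have step: "F (P(i := R')) = F (P(i := R1)) \<or>
        (y \<in> F (P(i := R1)) \<and> s \<notin> F (P(i := R1)) \<and> F (P(i := R')) = F (P(i := R1)) - {y} \<union> {s})"
      using reverse_covered_pair_outcome[OF CR SP P1 i cov1] unfolding R1_back fun_upd_upd .
    have "(s, x) \<in> R'" if "(s, x) \<in> R1" for x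
      using that cov unfolding R1_def reverse_pair_def covers_def by auto
    then show ?thesis
      using IH step y unfolding overtaken_def by blast
  qed
qed

theorem lemma10:
  fixes V :: "'v set" and A :: "'a set" and F :: "('v \<Rightarrow> 'a rel) \<Rightarrow> 'a set"
  assumes "finite V" and "V \<noteq> {}" and "finite A"
    and "consular_rule V A F" and "SPP V A F" and "SPO V A F"
    and "profile V A P" and "F P = {a, b}"
    and "i \<in> V" and "s \<in> A" and "moves_up A s (P i) R'"
  shows "(s \<in> {a, b} \<longrightarrow> F (P(i := R')) = F P) \<and>
         (s \<notin> {a, b} \<longrightarrow>
            F (P(i := R')) = F P \<or>
            (\<exists>x\<in>{a, b}. F (P(i := R')) = ({a, b} - {x}) \<union> {s} \<and>
                         (x, s) \<in> P i \<and> (s, x) \<in> R'))"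
  using moves_up_outcome_unchanged[OF assms(4,6,5,7,9,11)]
    moves_up_outcome[OF assms(4,6,5,7,9,10,3,11)]
  unfolding assms(8) by blast

end
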